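(* For every binary relation $S$ on $\Sigma^*$ there is an ECRPQ($S$) query $\phi(x,x')$ and a deterministic logarithmic-space algorithm that, given $R\in\mathsf{REG}_2$ over $\Sigma$, constructs a labeled graph $G$ and two nodes $v,v'$ such that $G\models\phi(v,v')$ if and only if $R\cap S\neq\emptyset$.
   Context: $\Sigma$ is a finite alphabet, $\Sigma_\bot=\Sigma\cup\{\bot\}$ with $\bot\notin\Sigma$. For $(w_1,\dots,w_n)\in(\Sigma^* )^n$, $w_1\otimes\cdots\otimes w_n$ is the word over $\Sigma_\bot^n$ of length $\max_i|w_i|$ whose $k$-th letter is the tuple of $k$-th letters of the $w_i$, with $\bot$ used when $|w_i|<k$. $\mathsf{REG}_n$ is the class of $R\subseteq(\Sigma^* )^n$ such that some NFA over $\Sigma_\bot^n$ accepts exactly $\{w_1\otimes\cdots\otimes w_n:(w_1,\dots,w_n)\in R\}$; they are given by such NFAs. The graph may be labeled over an alphabet extending $\Sigma$ (e.g. containing $\Sigma_\bot\times\Sigma_\bot$ and fresh symbols), and $S$ is regarded as a relation on words over this alphabet. Labeled graphs, paths, labels, and ECRPQ($S$) queries $\exists\bar y(\bigwedge_i(u_i\xrightarrow{\chi_i:L_i}u_i')\wedge\bigwedge_j R_j(\bar\chi_j)\wedge\bigwedge_{(i,j)\in I}S(\chi_i,\chi_j))$ (with $L_i$ regular languages and $R_j$ regular relations) are as usual: satisfaction requires nodes for $\bar y$ and paths $\rho_i$ from $u_i$ to $u_i'$ with label in $L_i$, such that label tuples satisfy every $R_j$ atom and every $S$ atom. *)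

theory Defs
  imports Complex_Main
begin

text \<open>An NFA over letters of type 'c: (initial states, final states, transitions).\<close>
type_synonym 'c nfa = "nat list \<times> nat list \<times> (nat \<times> 'c \<times> nat) list"

fun steps :: "(nat \<times> 'c \<times> nat) list \<Rightarrow> nat \<Rightarrow> 'c list \<Rightarrow> nat \<Rightarrow> bool" where
  "steps T p [] q = (p = q)"
| "steps T p (c # w) q = (\<exists>r. (p, c, r) \<in> set T \<and> steps T r w q)"

definition nfa_lang :: "'c nfa \<Rightarrow> 'c list set" where
  "nfa_lang A = (case A of (I, F, T) \<Rightarrow>
     {w. \<exists>p\<in>set I. \<exists>q\<in>set F. steps T p w q})"

text \<open>Letters of \<open>\<Sigma>_\<bottom>^n\<close> are lists of length n of options; \<open>None\<close> is \<open>\<bottom>\<close>.\<close>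
definition conv :: "'c list list \<Rightarrow> 'c option list list" where
  "conv ws = map (\<lambda>k. map (\<lambda>w. if k < length w then Some (w ! k) else None) ws)
                 [0..<foldr max (map length ws) 0]"

definition conv2 :: "'c list \<Rightarrow> 'c list \<Rightarrow> ('c option \<times> 'c option) list" where
  "conv2 u w = map (\<lambda>l. (l ! 0, l ! 1)) (conv [u, w])"

definition rel2 :: "('a option \<times> 'a option) nfa \<Rightarrow> ('a list \<times> 'a list) set" where
  "rel2 A = {(u, w). conv2 u w \<in> nfa_lang A}"

text \<open>Graph alphabet extending \<open>\<Sigma>\<close>: letters of \<open>\<Sigma>\<close>, letters of \<open>\<Sigma>_\<bottom>\<times>\<Sigma>_\<bottom>\<close>, and
  (countably many) fresh symbols.\<close>
datatype 'a lab = Base 'a | Pr "'a option" "'a option" | Fresh nat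

text \<open>A finite labeled graph: (nodes, labeled edges).\<close>
type_synonym 'b graph = "nat list \<times> (nat \<times> 'b \<times> nat) list"

definition wf_graph :: "'b graph \<Rightarrow> bool" where
  "wf_graph G = (\<forall>(p, b, q) \<in> set (snd G). p \<in> set (fst G) \<and> q \<in> set (fst G))"

definition gpath :: "'b graph \<Rightarrow> nat \<Rightarrow> 'b list \<Rightarrow> nat \<Rightarrow> bool" where
  "gpath G u w u' = steps (snd G) u w u'"

text \<open>An ECRPQ(S) query phi(x,x'): free variables x, x' (node variables are nats; all
  other variables are existentially quantified); path atoms \<open>u_i -\<chi>_i:L_i\<rightarrow> u_i'\<close>
  (the i-th atom introduces path variable \<open>\<chi>_i\<close>); regular relation atoms
  \<open>R_j(\<chi>_{j1},...,\<chi>_{jk})\<close> (NFA over \<open>\<Gamma>_\<bottom>^k\<close>, list of path-variable indices);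
  S atoms \<open>S(\<chi>_i,\<chi>_j)\<close> given by index pairs (i,j).\<close>
record 'b ecrpq =
  qx :: nat
  qx' :: nat
  patoms :: "(nat \<times> 'b nfa \<times> nat) list"
  ratoms :: "('b option list nfa \<times> nat list) list"
  satoms :: "(nat \<times> nat) list"

definition wf_query :: "'b ecrpq \<Rightarrow> bool" where
  "wf_query \<phi> =
     ((\<forall>(A, idx) \<in> set (ratoms \<phi>). \<forall>i \<in> set idx. i < length (patoms \<phi>)) \<and>
      (\<forall>(i, j) \<in> set (satoms \<phi>). i < length (patoms \<phi>) \<and> j < length (patoms \<phi>)))"

definition liftS :: "('a list \<times> 'a list) set \<Rightarrow> ('a lab list \<times> 'a lab list) set" where
  "liftS S = {(map Base u, map Base w) | u w. (u, w) \<in> S}"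

definition sat :: "('a list \<times> 'a list) set \<Rightarrow> 'a lab ecrpq \<Rightarrow> 'a lab graph \<Rightarrow> nat \<Rightarrow> nat \<Rightarrow> bool"
  where
  "sat S \<phi> G v v' =
    (\<exists>(\<nu> :: nat \<Rightarrow> nat) (ws :: 'a lab list list).
       \<nu> (qx \<phi>) = v \<and> \<nu> (qx' \<phi>) = v' \<and> (\<forall>y. \<nu> y \<in> set (fst G)) \<and>
       length ws = length (patoms \<phi>) \<and>
       (\<forall>i < length (patoms \<phi>). case patoms \<phi> ! i of (u, L, u') \<Rightarrow>
           gpath G (\<nu> u) (ws ! i) (\<nu> u') \<and> ws ! i \<in> nfa_lang L) \<and>
       (\<forall>(A, idx) \<in> set (ratoms \<phi>). conv (map (\<lambda>i. ws ! i) idx) \<in> nfa_lang A) \<and>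
       (\<forall>(i, j) \<in> set (satoms \<phi>). (ws ! i, ws ! j) \<in> liftS S))"

datatype 'a tok = TSym 'a | TBot | T0 | T1 | TEnd | TSep | TPr | TFr

fun bin :: "nat \<Rightarrow> 'a tok list" where
  "bin n = (if n = 0 then [] else bin (n div 2) @ [if odd n then T1 else T0])"

definition enc_nat :: "nat \<Rightarrow> 'a tok list" where
  "enc_nat n = bin n @ [TEnd]"

definition enc_nats :: "nat list \<Rightarrow> 'a tok list" where
  "enc_nats ns = concat (map enc_nat ns) @ [TSep]"

definition enc_opt :: "'a option \<Rightarrow> 'a tok list" where
  "enc_opt x = (case x of None \<Rightarrow> [TBot] | Some a \<Rightarrow> [TSym a])"

definition enc_in :: "('a option \<times> 'a option) nfa \<Rightarrow> 'a tok list" where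
  "enc_in A = (case A of (I, F, T) \<Rightarrow>
     enc_nats I @ enc_nats F @
     concat (map (\<lambda>(p, (x, y), q). enc_nat p @ enc_opt x @ enc_opt y @ enc_nat q) T) @ [TSep])"

fun enc_lab :: "'a lab \<Rightarrow> 'a tok list" where
  "enc_lab (Base a) = [TSym a]"
| "enc_lab (Pr x y) = TPr # enc_opt x @ enc_opt y"
| "enc_lab (Fresh n) = TFr # enc_nat n"

definition enc_out :: "'a lab graph \<Rightarrow> nat \<Rightarrow> nat \<Rightarrow> 'a tok list" where
  "enc_out G v v' =
     enc_nats (fst G) @
     concat (map (\<lambda>(p, b, q). enc_nat p @ enc_lab b @ enc_nat q) (snd G)) @ [TSep] @
     enc_nat v @ enc_nat v'"

text \<open>A deterministic transducer with a two-way read-only input tape (with endmarkers,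
  read as None), one two-way work tape over alphabet nat (blank 0), and a one-way
  write-only output tape.  M = (initial state, halting state, transition function);
  \<open>\<delta> q a s = (q', input move, symbol written, work move, output)\<close>.\<close>
type_synonym ('i, 'o) tm =
  "nat \<times> nat \<times> (nat \<Rightarrow> 'i option \<Rightarrow> nat \<Rightarrow> nat \<times> int \<times> nat \<times> int \<times> 'o option)"

text \<open>Configuration: (state, input head, work tape, work head, output written so far).\<close>
type_synonym 'o conf = "nat \<times> nat \<times> (nat \<Rightarrow> nat) \<times> nat \<times> 'o list"

definition tm_ok :: "('i, 'o) tm \<Rightarrow> bool" where
  "tm_ok M = (case M of (q0, qf, \<delta>) \<Rightarrow>
     (\<exists>k. q0 < k \<and> qf < k \<and>
        (\<forall>q a s. q < k \<longrightarrow> s < k \<longrightarrow>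
           (case \<delta> q a s of (q', dh, s', dp, _) \<Rightarrow>
              q' < k \<and> s' < k \<and> dh \<in> {-1, 0, 1} \<and> dp \<in> {-1, 0, 1}))))"

definition read_in :: "'i list \<Rightarrow> nat \<Rightarrow> 'i option" where
  "read_in w h = (if 1 \<le> h \<and> h \<le> length w then Some (w ! (h - 1)) else None)"

definition tm_step :: "('i, 'o) tm \<Rightarrow> 'i list \<Rightarrow> 'o conf \<Rightarrow> 'o conf" where
  "tm_step M w c = (case M of (q0, qf, \<delta>) \<Rightarrow> case c of (q, h, tape, p, out) \<Rightarrow>
     if q = qf then c else
     (case \<delta> q (read_in w h) (tape p) of (q', dh, s', dp, ot) \<Rightarrow>
        (q', min (nat (int h + dh)) (length w + 1), tape(p := s'), nat (int p + dp),
         out @ (case ot of None \<Rightarrow> [] | Some x \<Rightarrow> [x]))))"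

definition tm_conf :: "('i, 'o) tm \<Rightarrow> 'i list \<Rightarrow> nat \<Rightarrow> 'o conf" where
  "tm_conf M w t = (tm_step M w ^^ t) (fst M, 0, \<lambda>_. 0, 0, [])"

definition tm_computes :: "('i, 'o) tm \<Rightarrow> 'i list \<Rightarrow> 'o list \<Rightarrow> bool" where
  "tm_computes M w u = (\<exists>t. case tm_conf M w t of (q, h, tape, p, out) \<Rightarrow>
                          q = fst (snd M) \<and> out = u)"

text \<open>Work-tape head position (hence space used) is O(log n) on inputs of length n.\<close>
definition logspace :: "('i, 'o) tm \<Rightarrow> bool" where
  "logspace M = (tm_ok M \<and>
     (\<exists>c::nat. \<forall>w t. case tm_conf M w t of (q, h, tape, p, out) \<Rightarrow>
        real p \<le> real c * log 2 (real (length w + 2))))"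

end

theory Submission
  imports Defs
begin

text \<open>
  The graph is a copy of \<open>A\<close> whose edges carry the letters \<open>Pr x y\<close>, entered from a source by a
  fresh letter and left to a target by the same letter; the source also carries a loop for every
  letter of \<open>\<Sigma>\<close>. The query asks for a source-target path \<open>\<chi>\<close> and two loops \<open>\<chi>\<^sub>1, \<chi>\<^sub>2\<close> at the
  source with \<open>S(\<chi>\<^sub>1, \<chi>\<^sub>2)\<close>, and a single synchronous relation forces \<open>\<chi> = \<chi>\<^sub>1 \<otimes> \<chi>\<^sub>2\<close>; so it holds
  iff \<open>A\<close> accepts some pair of \<open>S\<close>. The graph is written by a two-pass finite-state transducer,
  which needs no work tape and so is in particular log-space; naming state \<open>p\<close> of \<open>A\<close> as node
  \<open>2p + 1\<close> lets it print node names by appending the binary digit 1 to the input numbers.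
\<close>

section \<open>The query\<close>

definition univ_list :: "'a::finite list" where
  "univ_list = (SOME xs. set xs = UNIV)"

lemma set_univ_list [simp]: "set (univ_list :: 'a::finite list) = UNIV"
  unfolding univ_list_def by (rule someI_ex) (rule finite_list[OF finite_UNIV])

definition loop_nfa :: "'c list \<Rightarrow> 'c nfa" where
  "loop_nfa cs = ([0], [0], map (\<lambda>c. (0, c, 0)) cs)"

lemma nfa_lang_loop_nfa: "nfa_lang (loop_nfa cs) = lists (set cs)"
proof -
  have "steps (map (\<lambda>c. (0, c, 0)) cs) 0 w 0 \<longleftrightarrow> w \<in> lists (set cs)" for w
    by (induction w) auto
  then show ?thesis unfolding nfa_lang_def loop_nfa_def by auto
qed

definition fresh_nfa :: "'a lab nfa" where
  "fresh_nfa = ([0], [1], [(0, Fresh 0, 1)])"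

lemma nfa_lang_fresh_nfa: "nfa_lang fresh_nfa = {[Fresh 0]}"
proof -
  have "steps [(0, Fresh 0, 1)] 0 w 1 \<longleftrightarrow> w = [Fresh 0]" for w :: "'a lab list"
  proof -
    have "steps [(0, Fresh 0, 1)] 1 w 1 \<longleftrightarrow> w = []" for w :: "'a lab list"
      by (cases w) auto
    then show ?thesis by (cases w) auto
  qed
  then show ?thesis unfolding nfa_lang_def fresh_nfa_def by auto
qed

definition nth_opt :: "'c list \<Rightarrow> nat \<Rightarrow> 'c option" where
  "nth_opt w k = (if k < length w then Some (w ! k) else None)"

lemma nth_opt_map: "nth_opt (map f u) k = map_option f (nth_opt u k)"
  by (simp add: nth_opt_def)

lemma conv_three:
  "conv [a, b, c] = map (\<lambda>k. [nth_opt a k, nth_opt b k, nth_opt c k])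
     [0..<max (length a) (max (length b) (length c))]"
  by (simp add: conv_def nth_opt_def)

lemma conv2_nth_opt:
  "conv2 u w = map (\<lambda>k. (nth_opt u k, nth_opt w k)) [0..<max (length u) (length w)]"
  by (simp add: conv2_def conv_def nth_opt_def)

definition sync_letters :: "'a::finite lab option list list" where
  "sync_letters = [[Some (Pr x y), map_option Base x, map_option Base y].
                     (x, y) \<leftarrow> univ_list, x \<noteq> None \<or> y \<noteq> None]"

lemma sync_letter_iff:
  "[p, map_option Base x, map_option Base y] \<in> set sync_letters \<longleftrightarrow>
     p = Some (Pr x y) \<and> (x \<noteq> None \<or> y \<noteq> None)"
  unfolding sync_letters_def using option.inj_map[OF injI[of Base]] by (auto dest: injD)

lemma conv_sync_letters_iff:
  fixes u w :: "'a::finite list"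
  shows "set (conv [b, map Base u, map Base w]) \<subseteq> set sync_letters \<longleftrightarrow>
           b = map (case_prod Pr) (conv2 u w)"
    (is "?sync \<longleftrightarrow> _")
proof -
  define L where "L = max (length b) (max (length u) (length w))"
  define good where "good k \<longleftrightarrow> nth_opt b k = Some (Pr (nth_opt u k) (nth_opt w k)) \<and>
                                (nth_opt u k \<noteq> None \<or> nth_opt w k \<noteq> None)" for k
  have "?sync \<longleftrightarrow> (\<forall>k<L. good k)"
    unfolding conv_three L_def good_def nth_opt_map sync_letter_iff [symmetric] by auto
  also have "\<dots> \<longleftrightarrow> b = map (case_prod Pr) (conv2 u w)"
  proof
    assume all_good: "\<forall>k<L. good k"
    have "length b = L \<and> max (length u) (length w) = L"
    proof (cases "L = 0")
      case False
      then have "good (L - 1)" using all_good by simp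
      then show ?thesis unfolding good_def nth_opt_def L_def by (auto split: if_splits)
    qed (simp add: L_def)
    then show "b = map (case_prod Pr) (conv2 u w)"
    proof (intro nth_equalityI)
      fix k assume "k < length b"
      with \<open>length b = L \<and> _\<close> all_good have "nth_opt b k = Some (Pr (nth_opt u k) (nth_opt w k))"
        by (simp add: good_def)
      with \<open>k < length b\<close> \<open>length b = L \<and> _\<close> show "b ! k = map (case_prod Pr) (conv2 u w) ! k"
        by (simp add: conv2_nth_opt nth_opt_def)
    qed (simp add: conv2_nth_opt)
  next
    assume "b = map (case_prod Pr) (conv2 u w)"
    then show "\<forall>k<L. good k"
      unfolding good_def L_def by (auto simp: conv2_nth_opt nth_opt_def)
  qed
  finally show ?thesis .
qed

lemma sat_iff_list_all2:
  "sat S \<phi> G v v' \<longleftrightarrow>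
     (\<exists>\<nu> ws. \<nu> (qx \<phi>) = v \<and> \<nu> (qx' \<phi>) = v' \<and> (\<forall>y. \<nu> y \<in> set (fst G)) \<and>
        list_all2 (\<lambda>(u, L, u') w. gpath G (\<nu> u) w (\<nu> u') \<and> w \<in> nfa_lang L) (patoms \<phi>) ws \<and>
        (\<forall>(A, idx) \<in> set (ratoms \<phi>). conv (map ((!) ws) idx) \<in> nfa_lang A) \<and>
        (\<forall>(i, j) \<in> set (satoms \<phi>). (ws ! i, ws ! j) \<in> liftS S))"
  unfolding sat_def list_all2_conv_all_nth by (intro ex_cong1) (auto simp: split_beta)

(* In ECRPQ notation, with # = Fresh 0 and \<Gamma> the letters Pr x y:
     \<phi>(x, x') = \<exists>y\<^sub>1 y\<^sub>2. x -#-> y\<^sub>1 \<and> y\<^sub>1 -\<chi>:\<Gamma>*-> y\<^sub>2 \<and> y\<^sub>2 -#-> x' \<and> x -\<chi>\<^sub>1:\<Sigma>*-> x \<and> x -\<chi>\<^sub>2:\<Sigma>*-> x \<and>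
                 R(\<chi>, \<chi>\<^sub>1, \<chi>\<^sub>2) \<and> S(\<chi>\<^sub>1, \<chi>\<^sub>2),
   where R, whose letters are sync_letters, holds iff \<chi> = \<chi>\<^sub>1 \<otimes> \<chi>\<^sub>2 letter by letter.
   Node variables 0, 1, 2, 3 are x, x', y\<^sub>1, y\<^sub>2; path variables are numbered by their atom. *)
definition reduction_query :: "'a::finite lab ecrpq" where
  "reduction_query =
     \<lparr>qx = 0, qx' = 1,
      patoms = [(0, fresh_nfa, 2), (2, loop_nfa (map (case_prod Pr) univ_list), 3), (3, fresh_nfa, 1),
                (0, loop_nfa (map Base univ_list), 0), (0, loop_nfa (map Base univ_list), 0)],
      ratoms = [(loop_nfa sync_letters, [1, 3, 4])],
      satoms = [(3, 4)]\<rparr>"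

lemma wf_reduction_query: "wf_query reduction_query"
  unfolding wf_query_def reduction_query_def by simp

lemma sat_reduction_query:
  fixes G :: "'a::finite lab graph"
  assumes "v \<in> set (fst G)" "v' \<in> set (fst G)"
  shows "sat S reduction_query G v v' \<longleftrightarrow>
    (\<exists>y\<^sub>1\<in>set (fst G). \<exists>y\<^sub>2\<in>set (fst G). \<exists>u w. (u, w) \<in> S \<and>
       gpath G v [Fresh 0] y\<^sub>1 \<and> gpath G y\<^sub>1 (map (case_prod Pr) (conv2 u w)) y\<^sub>2 \<and>
       gpath G y\<^sub>2 [Fresh 0] v' \<and> gpath G v (map Base u) v \<and> gpath G v (map Base w) v)"
  (is "_ \<longleftrightarrow> ?paths")
proof
  assume "sat S reduction_query G v v'"
  then obtain \<nu> :: "nat \<Rightarrow> nat" and ws where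
    nodes: "\<forall>y. \<nu> y \<in> set (fst G)" and v: "\<nu> 0 = v" "\<nu> 1 = v'" and
    atoms: "list_all2 (\<lambda>(u, L, u') w. gpath G (\<nu> u) w (\<nu> u') \<and> w \<in> nfa_lang L)
      (patoms reduction_query) ws" and
    sync: "set (conv [ws ! 1, ws ! 3, ws ! 4]) \<subseteq> set sync_letters" and
    in_S: "(ws ! 3, ws ! 4) \<in> liftS S"
    unfolding sat_iff_list_all2 by (auto simp: reduction_query_def nfa_lang_loop_nfa)
  then obtain b d e where
    paths: "gpath G v [Fresh 0] (\<nu> 2)" "gpath G (\<nu> 2) b (\<nu> 3)" "gpath G (\<nu> 3) [Fresh 0] v'"
      "gpath G v d v" "gpath G v e v" and
    ws: "ws ! 1 = b" "ws ! 3 = d" "ws ! 4 = e"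
    by (auto simp: reduction_query_def list_all2_Cons1 nfa_lang_fresh_nfa)
  from in_S obtain u w where "(u, w) \<in> S" "d = map Base u" "e = map Base w"
    unfolding ws liftS_def by blast
  with sync have "b = map (case_prod Pr) (conv2 u w)"
    unfolding ws by (simp add: conv_sync_letters_iff)
  with nodes paths \<open>(u, w) \<in> S\<close> \<open>d = _\<close> \<open>e = _\<close> show ?paths by blast
next
  assume ?paths
  then obtain y\<^sub>1 y\<^sub>2 u w where
    y: "y\<^sub>1 \<in> set (fst G)" "y\<^sub>2 \<in> set (fst G)" and "(u, w) \<in> S" and
    paths: "gpath G v [Fresh 0] y\<^sub>1" "gpath G y\<^sub>1 (map (case_prod Pr) (conv2 u w)) y\<^sub>2"
      "gpath G y\<^sub>2 [Fresh 0] v'" "gpath G v (map Base u) v" "gpath G v (map Base w) v"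
    by blast
  define \<nu> :: "nat \<Rightarrow> nat"
    where "\<nu> n = (if n = 1 then v' else if n = 2 then y\<^sub>1 else if n = 3 then y\<^sub>2 else v)" for n
  define ws
    where "ws = [[Fresh 0], map (case_prod Pr) (conv2 u w), [Fresh 0], map Base u, map Base w]"
  have "\<forall>n. \<nu> n \<in> set (fst G)" using y assms by (simp add: \<nu>_def)
  moreover have "\<nu> (qx reduction_query) = v" "\<nu> (qx' reduction_query) = v'"
    by (simp_all add: reduction_query_def \<nu>_def)
  moreover have "list_all2 (\<lambda>(u, L, u') w. gpath G (\<nu> u) w (\<nu> u') \<and> w \<in> nfa_lang L)
      (patoms reduction_query) ws"
    using paths
    by (simp add: reduction_query_def ws_def \<nu>_def nfa_lang_fresh_nfa nfa_lang_loop_nfa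
        in_lists_conv_set)
  moreover have "\<forall>(A, idx) \<in> set (ratoms reduction_query). conv (map ((!) ws) idx) \<in> nfa_lang A"
    by (simp add: reduction_query_def ws_def nfa_lang_loop_nfa lists_eq_set conv_sync_letters_iff)
  moreover have "\<forall>(i, j) \<in> set (satoms reduction_query). (ws ! i, ws ! j) \<in> liftS S"
    using \<open>(u, w) \<in> S\<close> by (auto simp: reduction_query_def ws_def liftS_def)
  ultimately show "sat S reduction_query G v v'"
    unfolding sat_iff_list_all2 by blast
qed

section \<open>The graph\<close>

definition nfa_states :: "'c nfa \<Rightarrow> nat list" where
  "nfa_states A = (case A of (I, F, T) \<Rightarrow> I @ F @ concat (map (\<lambda>(p, _, q). [p, q]) T))"

fun trans_edge :: "nat \<times> ('a option \<times> 'a option) \<times> nat \<Rightarrow> nat \<times> 'a lab \<times> nat" where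
  "trans_edge (p, (x, y), q) = (2 * p + 1, Pr x y, 2 * q + 1)"

definition reduction_edges :: "('a::finite option \<times> 'a option) nfa \<Rightarrow> (nat \<times> 'a lab \<times> nat) list"
  where
  "reduction_edges A = (case A of (I, F, T) \<Rightarrow>
     map (\<lambda>a. (0, Base a, 0)) univ_list @ map (\<lambda>i. (0, Fresh 0, 2 * i + 1)) I @
     map (\<lambda>f. (2 * f + 1, Fresh 0, 2)) F @ map trans_edge T)"

definition reduction_graph :: "('a::finite option \<times> 'a option) nfa \<Rightarrow> 'a lab graph" where
  "reduction_graph A = (map (\<lambda>n. 2 * n + 1) (nfa_states A) @ [0, 2], reduction_edges A)"

lemma wf_reduction_graph: "wf_graph (reduction_graph A)"
  unfolding wf_graph_def reduction_graph_def reduction_edges_def nfa_states_def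
  by (cases A) (force split: prod.splits)

lemma gpath_reduction_graph_Pr:
  "gpath (reduction_graph (I, F, T)) (2 * p + 1) (map (case_prod Pr) \<pi>) (2 * q + 1) \<longleftrightarrow>
     steps T p \<pi> q"
  unfolding gpath_def reduction_graph_def snd_conv
proof (induction \<pi> arbitrary: p)
  case (Cons c \<pi>)
  have "(2 * p + 1, case_prod Pr c, r) \<in> set (reduction_edges (I, F, T)) \<longleftrightarrow>
        (\<exists>r'. r = 2 * r' + 1 \<and> (p, c, r') \<in> set T)" for r
    by (cases c) (auto simp: reduction_edges_def image_iff intro: bexI[of _ "(p, c, _)"])
  then show ?case using Cons.IH by auto
qed simp

lemma gpath_reduction_graph_Base: "gpath (reduction_graph A) 0 (map Base u) 0"
  unfolding gpath_def reduction_graph_def snd_conv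
proof (induction u)
  case (Cons a u)
  have "(0, Base a, 0) \<in> set (reduction_edges A)" by (cases A) (simp add: reduction_edges_def)
  with Cons show ?case by auto
qed simp

lemma gpath_reduction_graph_source:
  "gpath (reduction_graph (I, F, T)) 0 [Fresh 0] y \<longleftrightarrow> (\<exists>i\<in>set I. y = 2 * i + 1)"
  by (auto simp: gpath_def reduction_graph_def reduction_edges_def)

lemma gpath_reduction_graph_target:
  "gpath (reduction_graph (I, F, T)) y [Fresh 0] 2 \<longleftrightarrow> (\<exists>f\<in>set F. y = 2 * f + 1)"
  by (auto simp: gpath_def reduction_graph_def reduction_edges_def)

lemma sat_reduction_graph:
  "sat S reduction_query (reduction_graph A) 0 2 \<longleftrightarrow> rel2 A \<inter> S \<noteq> {}"
proof -
  obtain I F T where A: "A = (I, F, T)" by (cases A)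
  let ?N = "set (fst (reduction_graph A))"
  have odd_nodes: "2 * i + 1 \<in> ?N" if "i \<in> set I \<union> set F" for i
    using that by (auto simp: reduction_graph_def nfa_states_def A)
  have "0 \<in> ?N" "2 \<in> ?N" by (simp_all add: reduction_graph_def)
  then have "sat S reduction_query (reduction_graph A) 0 2 \<longleftrightarrow>
          (\<exists>y\<^sub>1\<in>?N. \<exists>y\<^sub>2\<in>?N. \<exists>u w. (u, w) \<in> S \<and> (\<exists>i\<in>set I. y\<^sub>1 = 2 * i + 1) \<and>
             gpath (reduction_graph A) y\<^sub>1 (map (case_prod Pr) (conv2 u w)) y\<^sub>2 \<and>
             (\<exists>f\<in>set F. y\<^sub>2 = 2 * f + 1))"
    by (simp only: sat_reduction_query A gpath_reduction_graph_source gpath_reduction_graph_target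
          gpath_reduction_graph_Base simp_thms)
  also have "\<dots> \<longleftrightarrow> (\<exists>u w. (u, w) \<in> S \<and> (\<exists>i\<in>set I. \<exists>f\<in>set F. steps T i (conv2 u w) f))"
    using odd_nodes gpath_reduction_graph_Pr[of I F T] unfolding A by blast
  also have "\<dots> \<longleftrightarrow> rel2 A \<inter> S \<noteq> {}"
    by (auto simp: rel2_def nfa_lang_def A)
  finally show ?thesis .
qed

section \<open>Buffered finite-state transducers\<close>

type_synonym ('s, 'o) bconf = "('s \<times> 'o list) \<times> nat \<times> 'o list"

(* Pending
   output is kept in the control state, so the compiled Turing machine below emits one symbol per
   step and never uses its work tape. *)
locale buffered_transducer =
  fixes act :: "'s::finite \<Rightarrow> 'i option \<Rightarrow> 's \<times> int \<times> 'o::finite list"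
    and start halt :: 's
    and K :: nat
  assumes act_move: "fst (snd (act s a)) \<in> {-1, 0, 1}"
    and act_output: "length (snd (snd (act s a))) \<le> K"
begin

(* The head is clamped exactly as in tm_step, so that lift is a step-by-step simulation. *)
definition step :: "'i list \<Rightarrow> ('s, 'o) bconf \<Rightarrow> ('s, 'o) bconf" where
  "step w c = (case c of ((s, pd), h, out) \<Rightarrow>
     if s = halt \<and> pd = [] then c
     else if pd \<noteq> [] then ((s, tl pd), min h (length w + 1), out @ [hd pd])
     else (case act s (read_in w h) of (s', dh, pd') \<Rightarrow>
             ((s', pd'), min (nat (int h + dh)) (length w + 1), out)))"

definition reaches :: "'i list \<Rightarrow> ('s, 'o) bconf \<Rightarrow> ('s, 'o) bconf \<Rightarrow> bool" where
  "reaches w c c' \<longleftrightarrow> (\<exists>n. (step w ^^ n) c = c')"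

lemma reaches_refl: "reaches w c c"
  unfolding reaches_def by (rule exI[of _ 0]) simp

lemma reaches_trans [trans]: "reaches w c c' \<Longrightarrow> reaches w c' c'' \<Longrightarrow> reaches w c c''"
  unfolding reaches_def by (metis funpow_add comp_apply)

lemma reaches_step: "step w c = c' \<Longrightarrow> reaches w c c'"
  unfolding reaches_def by (rule exI[of _ 1]) simp

lemma reaches_flush:
  assumes "h \<le> length w + 1"
  shows "reaches w ((s, pd), h, out) ((s, []), h, out @ pd)"
proof (induction pd arbitrary: out)
  case (Cons x pd)
  have "step w ((s, x # pd), h, out) = ((s, pd), h, out @ [x])"
    using assms by (simp add: step_def)
  then show ?case using Cons.IH[of "out @ [x]"] by (simp add: reaches_trans[OF reaches_step])
qed (simp add: reaches_refl)

lemma reaches_read: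
  assumes "s \<noteq> halt" "act s (Some t) = (s', 1, pd)"
  shows "reaches (pre @ t # post) ((s, []), length pre + 1, out) ((s', []), length pre + 2, out @ pd)"
proof -
  let ?w = "pre @ t # post"
  have "read_in ?w (length pre + 1) = Some t" by (simp add: read_in_def nth_append)
  then have "step ?w ((s, []), length pre + 1, out) = ((s', pd), length pre + 2, out)"
    using assms by (simp add: step_def)
  then have "reaches ?w ((s, []), length pre + 1, out) ((s', pd), length pre + 2, out)"
    by (rule reaches_step)
  also have "reaches ?w \<dots> ((s', []), length pre + 2, out @ pd)"
    by (intro reaches_flush) simp
  finally show ?thesis .
qed

lemma reaches_blocks:
  assumes "\<And>x pre post out. x \<in> set xs \<Longrightarrow>
      reaches (pre @ f x @ post) ((s, []), length pre + 1, out)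
        ((s, []), length pre + length (f x) + 1, out @ g x)"
  shows "reaches (pre @ concat (map f xs) @ post) ((s, []), length pre + 1, out)
           ((s, []), length pre + length (concat (map f xs)) + 1, out @ concat (map g xs))"
  using assms
proof (induction xs arbitrary: pre out)
  case (Cons x xs)
  let ?w = "pre @ concat (map f (x # xs)) @ post"
  have "reaches ?w ((s, []), length pre + 1, out) ((s, []), length (pre @ f x) + 1, out @ g x)"
    using Cons.prems[of x pre "concat (map f xs) @ post"] by simp
  also have "reaches ?w \<dots> ((s, []), length (pre @ f x) + length (concat (map f xs)) + 1,
                              (out @ g x) @ concat (map g xs))"
    using Cons.IH[of "pre @ f x" "out @ g x"] Cons.prems by simp
  finally show ?case by (simp add: add.assoc)
qed (simp add: reaches_refl)

lemma reaches_scan: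
  assumes "\<And>t. t \<in> set seg \<Longrightarrow> act s (Some t) = (s, 1, f t)" "s \<noteq> halt"
  shows "reaches (pre @ seg @ post) ((s, []), length pre + 1, out)
           ((s, []), length pre + length seg + 1, out @ concat (map f seg))"
  using reaches_blocks[where f = "\<lambda>t. [t]" and xs = seg and g = f] assms reaches_read
  by simp

lemma reaches_rewind:
  assumes "\<And>t. act s (Some t) = (s, -1, [])" "s \<noteq> halt" "h \<le> length w"
  shows "reaches w ((s, []), h, out) ((s, []), 0, out)"
  using assms(3)
proof (induction h)
  case (Suc h)
  have "step w ((s, []), Suc h, out) = ((s, []), h, out)"
    using Suc.prems assms(1,2) by (simp add: step_def read_in_def)
  then show ?case using Suc by (simp add: reaches_trans[OF reaches_step])
qed (simp add: reaches_refl)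

definition controls :: "('s \<times> 'o list) set" where
  "controls = UNIV \<times> {pd. length pd \<le> K}"

lemma finite_controls: "finite controls"
proof -
  have "finite {pd :: 'o list. set pd \<subseteq> UNIV \<and> length pd \<le> K}"
    by (rule finite_lists_length_le) simp
  then show ?thesis unfolding controls_def by simp
qed

definition code :: "'s \<times> 'o list \<Rightarrow> nat" where
  "code = (SOME f. bij_betw f controls {0..<card controls})"

definition decode :: "nat \<Rightarrow> 's \<times> 'o list" where
  "decode = the_inv_into controls code"

lemma bij_code: "bij_betw code controls {0..<card controls}"
  unfolding code_def using ex_bij_betw_finite_nat[OF finite_controls] by (rule someI_ex)

lemma code_less: "\<sigma> \<in> controls \<Longrightarrow> code \<sigma> < card controls"
  using bij_betw_apply[OF bij_code] by simp

lemma decode_code: "\<sigma> \<in> controls \<Longrightarrow> decode (code \<sigma>) = \<sigma>"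
  unfolding decode_def by (rule the_inv_into_f_f[OF bij_betw_imp_inj_on[OF bij_code]])

lemma decode_in_controls: "q < card controls \<Longrightarrow> decode q \<in> controls"
  unfolding decode_def using bij_code
  by (auto intro: the_inv_into_into simp: bij_betw_def)

lemma code_eq_iff: "\<sigma> \<in> controls \<Longrightarrow> \<tau> \<in> controls \<Longrightarrow> code \<sigma> = code \<tau> \<longleftrightarrow> \<sigma> = \<tau>"
  using bij_betw_imp_inj_on[OF bij_code] by (auto dest: inj_onD)

definition delta :: "nat \<Rightarrow> 'i option \<Rightarrow> nat \<Rightarrow> nat \<times> int \<times> nat \<times> int \<times> 'o option" where
  "delta q a _ = (case decode q of (s, pd) \<Rightarrow>
     if pd \<noteq> [] then (code (s, tl pd), 0, 0, 0, Some (hd pd))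
     else (case act s a of (s', dh, pd') \<Rightarrow> (code (s', pd'), dh, 0, 0, None)))"

definition tm :: "('i, 'o) tm" where
  "tm = (code (start, []), code (halt, []), delta)"

definition lift :: "('s, 'o) bconf \<Rightarrow> 'o conf" where
  "lift c = (case c of (\<sigma>, h, out) \<Rightarrow> (code \<sigma>, h, \<lambda>_. 0, 0, out))"

lemma act_in_controls: "(fst (act s a), snd (snd (act s a))) \<in> controls"
  using act_output by (simp add: controls_def)

lemma act_output_length: "act s a = (s', dh, pd) \<Longrightarrow> length pd \<le> K"
  using act_output[of s a] by simp

lemma step_in_controls: "fst c \<in> controls \<Longrightarrow> fst (step w c) \<in> controls"
  by (auto simp: step_def controls_def dest: act_output_length split: prod.splits)

lemma tm_step_lift: "fst c \<in> controls \<Longrightarrow> tm_step tm w (lift c) = lift (step w c)"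
proof -
  assume "fst c \<in> controls"
  then obtain s pd h out where c: "c = ((s, pd), h, out)" and ctrl: "(s, pd) \<in> controls"
    by (cases c) auto
  have halt: "(halt, []) \<in> controls" by (simp add: controls_def)
  have blank: "(\<lambda>_. 0 :: nat)(0 := 0) = (\<lambda>_. 0)" by auto
  show ?thesis
    using ctrl code_eq_iff[OF ctrl halt] act_in_controls[of s "read_in w h"]
    by (auto simp: c tm_step_def tm_def lift_def step_def delta_def decode_code blank
        split: prod.splits)
qed

lemma tm_conf_lift: "tm_conf tm w t = lift ((step w ^^ t) ((start, []), 0, []))"
proof -
  have "tm_conf tm w t = (tm_step tm w ^^ t) (lift ((start, []), 0, []))"
    by (simp add: tm_conf_def tm_def lift_def)
  also have "(tm_step tm w ^^ t) (lift c) = lift ((step w ^^ t) c)" if "fst c \<in> controls" for c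
    using that
  proof (induction t arbitrary: c)
    case (Suc t)
    then show ?case
      by (simp only: funpow_Suc_right comp_apply tm_step_lift step_in_controls)
  qed simp
  then have "(tm_step tm w ^^ t) (lift ((start, []), 0, [])) =
      lift ((step w ^^ t) ((start, []), 0, []))"
    by (simp add: controls_def)
  finally show ?thesis .
qed

lemma tm_ok_tm: "tm_ok tm"
proof -
  have ctrl: "(s, []) \<in> controls" for s by (simp add: controls_def)
  have "0 < card controls" using code_less[OF ctrl[of start]] by linarith
  have "\<forall>q a b. q < card controls \<longrightarrow> b < card controls \<longrightarrow>
     (case delta q a b of (q', dh, s', dp, _) \<Rightarrow>
        q' < card controls \<and> s' < card controls \<and> dh \<in> {-1, 0, 1} \<and> dp \<in> {-1, 0, 1})"
  proof (intro allI impI)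
    fix q a b assume q: "q < card controls"
    obtain s pd where d: "decode q = (s, pd)" and "(s, pd) \<in> controls"
      using decode_in_controls[OF q] by (cases "decode q") auto
    then have "(s, tl pd) \<in> controls" by (simp add: controls_def)
    with \<open>0 < card controls\<close> show "case delta q a b of (q', dh, s', dp, _) \<Rightarrow>
        q' < card controls \<and> s' < card controls \<and> dh \<in> {-1, 0, 1} \<and> dp \<in> {-1, 0, 1}"
      using act_move[of s a] code_less[OF act_in_controls[of s a]] code_less
      by (auto simp: delta_def d split: prod.splits)
  qed
  then show ?thesis
    unfolding tm_ok_def tm_def prod.case using code_less[OF ctrl] by blast
qed

lemma logspace_tm: "logspace tm"
  unfolding logspace_def using tm_ok_tm
  by (auto simp: tm_conf_lift lift_def split: prod.splits)

lemma tm_computes_if_reaches: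
  assumes "reaches w ((start, []), 0, []) ((halt, []), h, out)"
  shows "tm_computes tm w out"
proof -
  from assms obtain t where "(step w ^^ t) ((start, []), 0, []) = ((halt, []), h, out)"
    unfolding reaches_def by blast
  then have "tm_conf tm w t = (code (halt, []), h, \<lambda>_. 0, 0, out)"
    by (simp add: tm_conf_lift lift_def)
  then show ?thesis unfolding tm_computes_def by (intro exI[of _ t]) (simp add: tm_def)
qed

end

section \<open>The transducer computing the graph\<close>

declare bin.simps [simp del] \<comment> \<open>it unfolds without bound\<close>

lemma bin_0 [simp]: "bin 0 = []"
  by (simp add: bin.simps)

lemma bin_odd: "bin (2 * n + 1) = bin n @ [T1]"
  by (subst bin.simps[of "2 * n + 1"]) simp

lemma bin_2: "bin 2 = [T1, T0]"
  using bin_odd[of 0] by (subst bin.simps[of 2]) simp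

lemma bin_digits: "set (bin n) \<subseteq> {T0, T1}"
  by (induction n rule: bin.induct) (subst bin.simps, auto)

lemma bin_eq_Nil_iff: "bin n = [] \<longleftrightarrow> n = 0"
  by (subst bin.simps) simp

lemma enc_nat_odd: "enc_nat (2 * n + 1) = bin n @ [T1, TEnd]"
  unfolding enc_nat_def bin_odd by simp

lemma enc_nat_0: "enc_nat 0 = [TEnd]"
  by (simp add: enc_nat_def)

lemma enc_nat_2: "enc_nat 2 = [T1, T0, TEnd]"
  by (simp add: enc_nat_def bin_2)

fun enc_edge :: "nat \<times> 'a lab \<times> nat \<Rightarrow> 'a tok list" where
  "enc_edge (p, b, q) = enc_nat p @ enc_lab b @ enc_nat q"

lemma enc_out_eq:
  "enc_out G v v' =
     enc_nats (fst G) @ concat (map enc_edge (snd G)) @ [TSep] @ enc_nat v @ enc_nat v'"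
proof -
  have edge: "(\<lambda>(p, b, q). enc_nat p @ enc_lab b @ enc_nat q) = enc_edge"
    by (auto simp: fun_eq_iff)
  show ?thesis unfolding enc_out_def edge ..
qed

fun enc_trans :: "nat \<times> ('a option \<times> 'a option) \<times> nat \<Rightarrow> 'a tok list" where
  "enc_trans (p, (x, y), q) = enc_nat p @ enc_opt x @ enc_opt y @ enc_nat q"

lemma enc_in_eq:
  "enc_in (I, F, T) = concat (map enc_nat I) @ [TSep] @ concat (map enc_nat F) @ [TSep] @
     concat (map enc_trans T) @ [TSep]"
proof -
  have trans: "(\<lambda>(p, (x, y), q). enc_nat p @ enc_opt x @ enc_opt y @ enc_nat q) = enc_trans"
    by (auto simp: fun_eq_iff)
  show ?thesis unfolding enc_in_def enc_nats_def prod.case trans by simp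
qed

lemma UNIV_tok: "(UNIV :: 'a tok set) = range TSym \<union> {TBot, T0, T1, TEnd, TSep, TPr, TFr}"
proof (rule set_eqI)
  show "t \<in> UNIV \<longleftrightarrow> t \<in> range TSym \<union> {TBot, T0, T1, TEnd, TSep, TPr, TFr}"
    for t :: "'a tok"
    by (cases t) auto
qed

instance tok :: (finite) finite
  by standard (simp add: UNIV_tok)

datatype mode =
  Start | Copy | Rewind | Initial | InitialDigits | Final | Source | LabelFst | LabelSnd | Target | Halt

lemma UNIV_mode:
  "UNIV = {Start, Copy, Rewind, Initial, InitialDigits, Final, Source, LabelFst, LabelSnd, Target,
           Halt}"
  by (auto intro: mode.exhaust)

instance mode :: finite
  by standard (simp add: UNIV_mode)

definition odd_copy :: "'a tok \<Rightarrow> 'a tok list" where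
  "odd_copy t = (if t = TEnd then [T1, TEnd] else if t \<in> {T0, T1} then [t] else [])"

definition base_loops :: "'a::finite tok list" where
  "base_loops = concat (map (\<lambda>a. enc_edge (0, Base a, 0)) univ_list)"

(* The first pass copies every number n of the input as 2n + 1, which yields the node list, and
   then appends the nodes 0, 2 and the \<Sigma>-loops. After rewinding, the second pass turns every
   initial state, final state and transition into its edge. *)
fun reduction_act :: "mode \<Rightarrow> 'a::finite tok option \<Rightarrow> mode \<times> int \<times> 'a tok list" where
  "reduction_act Start _ = (Copy, 1, [])"
| "reduction_act Copy None = (Rewind, -1, enc_nat 0 @ enc_nat 2 @ [TSep] @ base_loops)"
| "reduction_act Copy (Some t) = (Copy, 1, odd_copy t)"
| "reduction_act Rewind None = (Initial, 1, [])"
| "reduction_act Rewind (Some _) = (Rewind, -1, [])"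
| "reduction_act Initial (Some t) =
     (if t = TSep then (Final, 1, [])
      else if t = TEnd then (Initial, 1, enc_nat 0 @ enc_lab (Fresh 0) @ [T1, TEnd])
      else if t \<in> {T0, T1} then (InitialDigits, 1, enc_nat 0 @ enc_lab (Fresh 0) @ [t])
      else (Halt, 0, []))"
| "reduction_act InitialDigits (Some t) =
     (if t = TEnd then (Initial, 1, [T1, TEnd])
      else if t \<in> {T0, T1} then (InitialDigits, 1, [t])
      else (Halt, 0, []))"
| "reduction_act Final (Some t) =
     (if t = TSep then (Source, 1, [])
      else if t = TEnd then (Final, 1, [T1, TEnd] @ enc_lab (Fresh 0) @ enc_nat 2)
      else if t \<in> {T0, T1} then (Final, 1, [t])
      else (Halt, 0, []))"
| "reduction_act Source (Some t) =
     (if t = TSep then (Halt, 1, [TSep] @ enc_nat 0 @ enc_nat 2)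
      else if t = TEnd then (LabelFst, 1, [T1, TEnd, TPr])
      else if t \<in> {T0, T1} then (Source, 1, [t])
      else (Halt, 0, []))"
| "reduction_act LabelFst (Some t) =
     (if t \<in> insert TBot (range TSym) then (LabelSnd, 1, [t]) else (Halt, 0, []))"
| "reduction_act LabelSnd (Some t) =
     (if t \<in> insert TBot (range TSym) then (Target, 1, [t]) else (Halt, 0, []))"
| "reduction_act Target (Some t) =
     (if t = TEnd then (Source, 1, [T1, TEnd])
      else if t \<in> {T0, T1} then (Target, 1, [t])
      else (Halt, 0, []))"
| "reduction_act _ _ = (Halt, 0, [])"

lemma reduction_act_move: "fst (snd (reduction_act m a)) \<in> {-1, 0, 1}"
  by (induction m a rule: reduction_act.induct) auto

lemma reduction_act_output:
  fixes a :: "'a::finite tok option"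
  shows "length (snd (snd (reduction_act m a))) \<le> 7 + length (base_loops :: 'a tok list)"
  by (induction m a rule: reduction_act.induct)
     (auto simp: odd_copy_def enc_nat_0 enc_nat_2)

interpretation reduction:
  buffered_transducer "reduction_act :: mode \<Rightarrow> 'a::finite tok option \<Rightarrow> mode \<times> int \<times> 'a tok list"
    Start Halt "7 + length (base_loops :: 'a tok list)"
  by standard (rule reduction_act_move, rule reduction_act_output)

lemma reaches_digits:
  assumes "set ds \<subseteq> {T0, T1}" "m \<in> {InitialDigits, Final, Source, Target}"
  shows "reduction.reaches (pre @ ds @ post) ((m, []), length pre + 1, out)
           ((m, []), length pre + length ds + 1, out @ ds)"
proof -
  have "reduction_act m (Some t) = (m, 1, [t])" if "t \<in> set ds" for t
    using that assms by auto
  with assms(2) show ?thesis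
    using reduction.reaches_scan[of ds m "\<lambda>t. [t]" pre post out] by auto
qed

lemma reaches_initial:
  fixes pre :: "'a::finite tok list"
  shows "reduction.reaches (pre @ enc_nat i @ post) ((Initial, []), length pre + 1, out)
     ((Initial, []), length pre + length (enc_nat i :: 'a tok list) + 1,
      out @ enc_edge (0, Fresh 0, 2 * i + 1))"
proof (cases "bin i :: 'a tok list")
  case Nil
  then have "i = 0" by (simp add: bin_eq_Nil_iff)
  then show ?thesis
    using reduction.reaches_read[of Initial TEnd Initial _ pre post out]
    by (simp add: enc_nat_0 enc_nat_odd[of 0, simplified])
next
  case (Cons d ds)
  note bin_i = this
  have "set (bin i :: 'a tok list) \<subseteq> {T0, T1}" by (rule bin_digits)
  then have digits: "d \<in> {T0, T1}" "set ds \<subseteq> {T0, T1}"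
    unfolding bin_i by auto
  let ?w = "pre @ d # ds @ TEnd # post"
  have w: "pre @ enc_nat i @ post = ?w" by (simp add: enc_nat_def bin_i)
  have "reduction.reaches ?w ((Initial, []), length pre + 1, out)
          ((InitialDigits, []), length pre + 2, out @ enc_nat 0 @ enc_lab (Fresh 0) @ [d])"
    using reduction.reaches_read[of Initial d InitialDigits _ pre "ds @ TEnd # post" out] digits
    by auto
  also have "reduction.reaches ?w \<dots> ((InitialDigits, []), length pre + length ds + 2,
                 out @ enc_nat 0 @ enc_lab (Fresh 0) @ [d] @ ds)"
    using reaches_digits[of ds InitialDigits "pre @ [d]" "TEnd # post"
        "out @ enc_nat 0 @ enc_lab (Fresh 0) @ [d]"] digits by simp
  also have "reduction.reaches ?w \<dots> ((Initial, []), length pre + length ds + 3,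
                 out @ enc_nat 0 @ enc_lab (Fresh 0) @ [d] @ ds @ [T1, TEnd])"
    using reduction.reaches_read[of InitialDigits TEnd Initial "[T1, TEnd]" "pre @ d # ds" post
        "out @ enc_nat 0 @ enc_lab (Fresh 0) @ [d] @ ds"] by (simp add: numeral_eq_Suc)
  finally show ?thesis
    unfolding w enc_edge.simps enc_nat_odd by (simp add: enc_nat_def bin_i numeral_eq_Suc)
qed

lemma reaches_final:
  fixes pre :: "'a::finite tok list"
  shows "reduction.reaches (pre @ enc_nat f @ post) ((Final, []), length pre + 1, out)
     ((Final, []), length pre + length (enc_nat f :: 'a tok list) + 1,
      out @ enc_edge (2 * f + 1, Fresh 0, 2))"
proof -
  let ?w = "pre @ bin f @ TEnd # post"
  have w: "pre @ enc_nat f @ post = ?w" by (simp add: enc_nat_def)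
  have "reduction.reaches ?w ((Final, []), length pre + 1, out)
          ((Final, []), length pre + length (bin f :: 'a tok list) + 1, out @ bin f)"
    using reaches_digits[of "bin f" Final pre "TEnd # post" out] by (simp add: bin_digits)
  also have "reduction.reaches ?w \<dots> ((Final, []), length pre + length (bin f :: 'a tok list) + 2,
                 out @ bin f @ [T1, TEnd] @ enc_lab (Fresh 0) @ enc_nat 2)"
    using reduction.reaches_read[of Final TEnd Final _ "pre @ bin f" post "out @ bin f"] by simp
  finally show ?thesis
    unfolding w enc_edge.simps enc_nat_odd by (simp add: enc_nat_def numeral_eq_Suc)
qed

lemma enc_opt_singleton:
  obtains a where "enc_opt x = [a]" "a \<in> insert TBot (range TSym)"
  by (cases x) (auto simp: enc_opt_def)

lemma reaches_transition:
  fixes pre :: "'a::finite tok list"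
  shows "reduction.reaches (pre @ enc_trans tr @ post) ((Source, []), length pre + 1, out)
     ((Source, []), length pre + length (enc_trans tr :: 'a tok list) + 1,
      out @ enc_edge (trans_edge tr))"
proof -
  obtain p x y q where tr: "tr = (p, (x, y), q)" by (cases tr) auto
  obtain a b :: "'a tok" where ab: "enc_opt x = [a]" "enc_opt y = [b]"
    and labels: "a \<in> insert TBot (range TSym)" "b \<in> insert TBot (range TSym)"
    using enc_opt_singleton by metis
  let ?w = "pre @ bin p @ TEnd # a # b # bin q @ TEnd # post"
  let ?P = "length pre + length (bin p :: 'a tok list)"
  let ?Q = "length (bin q :: 'a tok list)"
  have w: "pre @ enc_trans tr @ post = ?w" by (simp add: tr enc_nat_def ab)
  have "reduction.reaches ?w ((Source, []), length pre + 1, out)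
          ((Source, []), ?P + 1, out @ bin p)"
    using reaches_digits[of "bin p" Source pre _ out] by (simp add: bin_digits)
  also have "reduction.reaches ?w \<dots> ((LabelFst, []), ?P + 2, out @ bin p @ [T1, TEnd, TPr])"
    using reduction.reaches_read[of Source TEnd LabelFst _ "pre @ bin p" _ "out @ bin p"] by simp
  also have "reduction.reaches ?w \<dots> ((LabelSnd, []), ?P + 3, out @ bin p @ [T1, TEnd, TPr, a])"
    using reduction.reaches_read[of LabelFst a LabelSnd "[a]" "pre @ bin p @ [TEnd]"
        "b # bin q @ TEnd # post" "out @ bin p @ [T1, TEnd, TPr]"] labels
    by (simp add: numeral_eq_Suc)
  also have "reduction.reaches ?w \<dots> ((Target, []), ?P + 4, out @ bin p @ [T1, TEnd, TPr, a, b])"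
    using reduction.reaches_read[of LabelSnd b Target "[b]" "pre @ bin p @ [TEnd, a]"
        "bin q @ TEnd # post" "out @ bin p @ [T1, TEnd, TPr, a]"] labels
    by (simp add: numeral_eq_Suc)
  also have "reduction.reaches ?w \<dots>
      ((Target, []), ?P + ?Q + 4, out @ bin p @ [T1, TEnd, TPr, a, b] @ bin q)"
    using reaches_digits[of "bin q" Target "pre @ bin p @ [TEnd, a, b]" _
        "out @ bin p @ [T1, TEnd, TPr, a, b]"]
    by (simp add: bin_digits numeral_eq_Suc)
  also have "reduction.reaches ?w \<dots>
      ((Source, []), ?P + ?Q + 5, out @ bin p @ [T1, TEnd, TPr, a, b] @ bin q @ [T1, TEnd])"
    using reduction.reaches_read[of Target TEnd Source _ "pre @ bin p @ [TEnd, a, b] @ bin q" post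
        "out @ bin p @ [T1, TEnd, TPr, a, b] @ bin q"]
    by (simp add: numeral_eq_Suc add.assoc)
  finally show ?thesis
    unfolding w tr trans_edge.simps enc_edge.simps enc_nat_odd
    by (simp add: enc_nat_def ab numeral_eq_Suc add.assoc)
qed

lemma reaches_first_pass:
  fixes w :: "'a::finite tok list"
  shows "reduction.reaches w ((Start, []), 0, [])
     ((Initial, []), 1, concat (map odd_copy w) @ enc_nat 0 @ enc_nat 2 @ [TSep] @ base_loops)"
    (is "reduction.reaches w _ ((Initial, []), 1, ?out)")
proof -
  have "reduction.reaches w ((Start, []), 0, []) ((Copy, []), 1, [])"
    by (intro reduction.reaches_step) (simp add: reduction.step_def read_in_def)
  also have "reduction.reaches w \<dots> ((Copy, []), length w + 1, concat (map odd_copy w))"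
    using reduction.reaches_scan[of w Copy odd_copy "[]" "[]" "[]"] by simp
  also have "reduction.reaches w \<dots>
      ((Rewind, enc_nat 0 @ enc_nat 2 @ [TSep] @ base_loops), length w, concat (map odd_copy w))"
    by (intro reduction.reaches_step) (simp add: reduction.step_def read_in_def)
  also have "reduction.reaches w \<dots> ((Rewind, []), length w, ?out)"
    by (intro reduction.reaches_flush) simp
  also have "reduction.reaches w \<dots> ((Rewind, []), 0, ?out)"
    by (intro reduction.reaches_rewind) simp_all
  also have "reduction.reaches w \<dots> ((Initial, []), 1, ?out)"
    by (intro reduction.reaches_step) (simp add: reduction.step_def read_in_def)
  finally show ?thesis .
qed

lemma reaches_second_pass:
  fixes I F :: "nat list" and T :: "(nat \<times> ('a::finite option \<times> 'a option) \<times> nat) list"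
  shows "reduction.reaches (enc_in (I, F, T)) ((Initial, []), 1, out)
     ((Halt, []), length (enc_in (I, F, T) :: 'a tok list) + 1,
      out @ concat (map (\<lambda>i. enc_edge (0, Fresh 0, 2 * i + 1)) I)
          @ concat (map (\<lambda>f. enc_edge (2 * f + 1, Fresh 0, 2)) F)
          @ concat (map (\<lambda>tr. enc_edge (trans_edge tr)) T)
          @ [TSep] @ enc_nat 0 @ enc_nat 2)"
proof -
  let ?CI = "concat (map enc_nat I) :: 'a tok list"
    and ?CF = "concat (map enc_nat F) :: 'a tok list"
    and ?CT = "concat (map enc_trans T) :: 'a tok list"
  let ?EI = "concat (map (\<lambda>i. enc_edge (0, Fresh 0, 2 * i + 1)) I)"
    and ?EF = "concat (map (\<lambda>f. enc_edge (2 * f + 1, Fresh 0, 2)) F)"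
    and ?ET = "concat (map (\<lambda>tr. enc_edge (trans_edge tr)) T)"
  let ?w = "?CI @ [TSep] @ ?CF @ [TSep] @ ?CT @ [TSep]"
  have "reduction.reaches ?w ((Initial, []), 1, out) ((Initial, []), length ?CI + 1, out @ ?EI)"
    using reduction.reaches_blocks[OF reaches_initial, where xs = I and pre = "[]"] by simp
  also have "reduction.reaches ?w \<dots> ((Final, []), length ?CI + 2, out @ ?EI)"
    using reduction.reaches_read[of Initial TSep Final "[]" ?CI] by simp
  also have "reduction.reaches ?w \<dots> ((Final, []), length ?CI + length ?CF + 2, out @ ?EI @ ?EF)"
    using reduction.reaches_blocks[where f = enc_nat
        and g = "\<lambda>f. enc_edge (2 * f + 1, Fresh 0, 2)", OF reaches_final, where xs = F and pre = "?CI @ [TSep]" and out = "out @ ?EI"] by simp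
  also have "reduction.reaches ?w \<dots> ((Source, []), length ?CI + length ?CF + 3, out @ ?EI @ ?EF)"
    using reduction.reaches_read[of Final TSep Source "[]" "?CI @ [TSep] @ ?CF"]
    by (simp add: numeral_eq_Suc)
  also have "reduction.reaches ?w \<dots>
      ((Source, []), length ?CI + length ?CF + length ?CT + 3, out @ ?EI @ ?EF @ ?ET)"
    using reduction.reaches_blocks[where f = enc_trans and g = "\<lambda>tr. enc_edge (trans_edge tr)",
        OF reaches_transition, where xs = T and pre = "?CI @ [TSep] @ ?CF @ [TSep]"
        and out = "out @ ?EI @ ?EF"]
    by (simp add: numeral_eq_Suc)
  also have "reduction.reaches ?w \<dots> ((Halt, []), length ?CI + length ?CF + length ?CT + 4,
      out @ ?EI @ ?EF @ ?ET @ [TSep] @ enc_nat 0 @ enc_nat 2)"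
    using reduction.reaches_read[of Source TSep Halt _ "?CI @ [TSep] @ ?CF @ [TSep] @ ?CT" "[]"
        "out @ ?EI @ ?EF @ ?ET"]
    by (simp add: numeral_eq_Suc add.assoc)
  finally show ?thesis by (simp add: enc_in_eq numeral_eq_Suc add.assoc)
qed

lemma odd_copy_digits: "set ds \<subseteq> {T0, T1} \<Longrightarrow> concat (map odd_copy ds) = ds"
  by (induction ds) (auto simp: odd_copy_def)

lemma odd_copy_enc_nat: "concat (map odd_copy (enc_nat n)) = enc_nat (2 * n + 1)"
  unfolding enc_nat_odd by (simp add: enc_nat_def odd_copy_digits bin_digits odd_copy_def)

lemma odd_copy_enc_nats:
  "concat (map odd_copy (concat (map enc_nat ns))) =
     concat (map enc_nat (map (\<lambda>n. 2 * n + 1) ns))"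
  by (induction ns) (simp_all add: odd_copy_enc_nat)

lemma odd_copy_enc_trans:
  "concat (map odd_copy (enc_trans (p, (x, y), q))) = enc_nat (2 * p + 1) @ enc_nat (2 * q + 1)"
  by (cases x; cases y) (simp_all add: enc_opt_def odd_copy_def odd_copy_enc_nat)

lemma enc_out_reduction_graph:
  fixes I F :: "nat list" and T :: "(nat \<times> ('a::finite option \<times> 'a option) \<times> nat) list"
  shows "enc_out (reduction_graph (I, F, T)) 0 2 =
     (concat (map odd_copy (enc_in (I, F, T))) @ enc_nat 0 @ enc_nat 2 @ [TSep] @ base_loops)
     @ concat (map (\<lambda>i. enc_edge (0, Fresh 0, 2 * i + 1)) I)
     @ concat (map (\<lambda>f. enc_edge (2 * f + 1, Fresh 0, 2)) F)
     @ concat (map (\<lambda>tr. enc_edge (trans_edge tr)) T)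
     @ [TSep] @ enc_nat 0 @ enc_nat 2"
proof -
  have "concat (map odd_copy (concat (map enc_trans T) :: 'a tok list)) =
        concat (map enc_nat (map (\<lambda>n. 2 * n + 1) (concat (map (\<lambda>(p, _, q). [p, q]) T))))"
    by (induction T) (auto simp: odd_copy_enc_trans simp del: enc_trans.simps)
  then have "concat (map odd_copy (enc_in (I, F, T))) =
             concat (map enc_nat (map (\<lambda>n. 2 * n + 1) (nfa_states (I, F, T))))"
    by (simp add: enc_in_eq nfa_states_def odd_copy_enc_nats odd_copy_def)
  then show ?thesis
    by (simp add: enc_out_eq reduction_graph_def reduction_edges_def enc_nats_def base_loops_def
        comp_def)
qed

lemma reaches_enc_out_reduction_graph:
  fixes A :: "('a::finite option \<times> 'a option) nfa"
  shows "reduction.reaches (enc_in A) ((Start, []), 0, [])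
           ((Halt, []), length (enc_in A :: 'a tok list) + 1, enc_out (reduction_graph A) 0 2)"
proof -
  obtain I F T where A: "A = (I, F, T)" by (cases A)
  show ?thesis
    unfolding A enc_out_reduction_graph
    by (rule reduction.reaches_trans[OF reaches_first_pass reaches_second_pass])
qed

theorem mainTheorem4:
  fixes S :: "('a::finite list \<times> 'a list) set"
  shows "\<exists>(\<phi> :: 'a lab ecrpq) (M :: ('a tok, 'a tok) tm).
           wf_query \<phi> \<and> logspace M \<and>
           (\<forall>A :: ('a option \<times> 'a option) nfa.
              \<exists>G v v'. tm_computes M (enc_in A) (enc_out G v v') \<and>
                wf_graph G \<and> v \<in> set (fst G) \<and> v' \<in> set (fst G) \<and>
                (sat S \<phi> G v v' \<longleftrightarrow> rel2 A \<inter> S \<noteq> {}))"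
proof (intro exI[of _ reduction_query] exI[of _ reduction.tm] conjI allI)
  show "wf_query reduction_query" by (rule wf_reduction_query)
  show "logspace reduction.tm" by (rule reduction.logspace_tm)
  fix A :: "('a option \<times> 'a option) nfa"
  show "\<exists>G v v'. tm_computes reduction.tm (enc_in A) (enc_out G v v') \<and>
          wf_graph G \<and> v \<in> set (fst G) \<and> v' \<in> set (fst G) \<and>
          (sat S reduction_query G v v' \<longleftrightarrow> rel2 A \<inter> S \<noteq> {})"
  proof (intro exI conjI)
    show "tm_computes reduction.tm (enc_in A) (enc_out (reduction_graph A) 0 2)"
      by (rule reduction.tm_computes_if_reaches[OF reaches_enc_out_reduction_graph])
    show "wf_graph (reduction_graph A)" by (rule wf_reduction_graph)
    show "0 \<in> set (fst (reduction_graph A))" "2 \<in> set (fst (reduction_graph A))"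
      by (simp_all add: reduction_graph_def)
    show "sat S reduction_query (reduction_graph A) 0 2 \<longleftrightarrow> rel2 A \<inter> S \<noteq> {}"
      by (rule sat_reduction_graph)
  qed
qed

end
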